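(* Let $\Omega$ be an infinite set, let $1\leq k<i\leq j$ be integers, and let $\Gamma=\Gamma^\Omega_{i,j;\geq k}$. Then for every positive integer $\ell$, every $\ell$-flower of $\Gamma$ is either a $j$-regular star, in which case $\ell=i-k$, or an $i$-regular star, in which case $\ell=j-k$; and both occur (every $j$-regular star is an $(i-k)$-flower and every $i$-regular star is a $(j-k)$-flower). Moreover, $\Gamma$ contains no $\ell$-star for any positive integer $\ell$.
   Context: $\Gamma^\Omega_{i,j;\geq k}$ is the bipartite graph with biparts the $i$-subsets and the $j$-subsets of $\Omega$ (two copies if $i=j$), an $i$-subset adjacent to a $j$-subset iff their intersection has at least $k$ elements. Let $\ell$ be a positive integer and let $\mathcal{A}$ be an infinite set of vertices in one bipart. $\mathcal{A}$ is an $\ell$-star if: (S1) every vertex $v$ of the other bipart is adjacent to exactly $\ell+1$ members of $\mathcal{A}$, or non-adjacent to exactly $\ell$ members of $\mathcal{A}$, or adjacent to no member of $\mathcal{A}$; (S2) for every $(\ell+1)$-subset $A\subset\mathcal{A}$ the number of vertices adjacent to every member of $A$ and to no member of $\mathcal{A}\setminus A$ is finite and nonzero; (S3) for every $\ell$-subset $B\subset\mathcal{A}$ the number of vertices adjacent to no member of $B$ and to every member of $\mathcal{A}\setminus B$ is finite and nonzero. $\mathcal{A}$ is an $\ell$-flower if: (F1) every vertex of the other bipart is adjacent to exactly $\ell+1$ members of $\mathcal{A}$, or to all members, or to none; (F2) as (S2); (F3) infinitely many vertices are adjacent to all members of $\mathcal{A}$. An $i$-regular star is the set of all $i$-subsets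 of $\Omega$ containing a fixed $(i-1)$-subset; a $j$-regular star is defined likewise. *)

theory Defs
  imports Main
begin

definition ksub :: "'a set \<Rightarrow> nat \<Rightarrow> 'a set set" where
  "ksub \<Omega> n = {A. A \<subseteq> \<Omega> \<and> finite A \<and> card A = n}"

(* Vertices of Gamma^Omega_{i,j;>=k} are tagged sets: (False, A) lies in the
   bipart of i-subsets, (True, B) in the bipart of j-subsets (two disjoint copies
   even when i = j). *)
definition bipart_i :: "'a set \<Rightarrow> nat \<Rightarrow> (bool \<times> 'a set) set" where
  "bipart_i \<Omega> i = {(False, A) | A. A \<in> ksub \<Omega> i}"

definition bipart_j :: "'a set \<Rightarrow> nat \<Rightarrow> (bool \<times> 'a set) set" where
  "bipart_j \<Omega> j = {(True, B) | B. B \<in> ksub \<Omega> j}"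

definition gadj :: "nat \<Rightarrow> bool \<times> 'a set \<Rightarrow> bool \<times> 'a set \<Rightarrow> bool" where
  "gadj k x y = (fst x \<noteq> fst y \<and> k \<le> card (snd x \<inter> snd y))"

(* generic l-star / l-flower: A is an infinite family in one bipart, Q the other
   bipart, adj v a the adjacency of v \<in> Q with a \<in> A *)
definition is_star_in :: "nat \<Rightarrow> ('v \<Rightarrow> 'v \<Rightarrow> bool) \<Rightarrow> 'v set \<Rightarrow> 'v set \<Rightarrow> bool" where
  "is_star_in l adj Q \<A> =
    (infinite \<A> \<and>
     (\<forall>v\<in>Q. (finite {a\<in>\<A>. adj v a} \<and> card {a\<in>\<A>. adj v a} = l + 1)
           \<or> (finite {a\<in>\<A>. \<not> adj v a} \<and> card {a\<in>\<A>. \<not> adj v a} = l)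
           \<or> {a\<in>\<A>. adj v a} = {}) \<and>
     (\<forall>A. A \<subseteq> \<A> \<and> finite A \<and> card A = l + 1 \<longrightarrow>
        finite {v\<in>Q. (\<forall>a\<in>A. adj v a) \<and> (\<forall>a\<in>\<A> - A. \<not> adj v a)} \<and>
        {v\<in>Q. (\<forall>a\<in>A. adj v a) \<and> (\<forall>a\<in>\<A> - A. \<not> adj v a)} \<noteq> {}) \<and>
     (\<forall>B. B \<subseteq> \<A> \<and> finite B \<and> card B = l \<longrightarrow>
        finite {v\<in>Q. (\<forall>b\<in>B. \<not> adj v b) \<and> (\<forall>a\<in>\<A> - B. adj v a)} \<and>
        {v\<in>Q. (\<forall>b\<in>B. \<not> adj v b) \<and> (\<forall>a\<in>\<A> - B. adj v a)} \<noteq> {}))"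

definition is_flower_in :: "nat \<Rightarrow> ('v \<Rightarrow> 'v \<Rightarrow> bool) \<Rightarrow> 'v set \<Rightarrow> 'v set \<Rightarrow> bool" where
  "is_flower_in l adj Q \<A> =
    (infinite \<A> \<and>
     (\<forall>v\<in>Q. (finite {a\<in>\<A>. adj v a} \<and> card {a\<in>\<A>. adj v a} = l + 1)
           \<or> (\<forall>a\<in>\<A>. adj v a)
           \<or> {a\<in>\<A>. adj v a} = {}) \<and>
     (\<forall>A. A \<subseteq> \<A> \<and> finite A \<and> card A = l + 1 \<longrightarrow>
        finite {v\<in>Q. (\<forall>a\<in>A. adj v a) \<and> (\<forall>a\<in>\<A> - A. \<not> adj v a)} \<and>
        {v\<in>Q. (\<forall>a\<in>A. adj v a) \<and> (\<forall>a\<in>\<A> - A. \<not> adj v a)} \<noteq> {}) \<and>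
     infinite {v\<in>Q. \<forall>a\<in>\<A>. adj v a})"

definition gamma_star :: "'a set \<Rightarrow> nat \<Rightarrow> nat \<Rightarrow> nat \<Rightarrow> nat \<Rightarrow> (bool \<times> 'a set) set \<Rightarrow> bool" where
  "gamma_star \<Omega> i j k l \<A> =
    ((\<A> \<subseteq> bipart_i \<Omega> i \<and> is_star_in l (gadj k) (bipart_j \<Omega> j) \<A>) \<or>
     (\<A> \<subseteq> bipart_j \<Omega> j \<and> is_star_in l (gadj k) (bipart_i \<Omega> i) \<A>))"

definition gamma_flower :: "'a set \<Rightarrow> nat \<Rightarrow> nat \<Rightarrow> nat \<Rightarrow> nat \<Rightarrow> (bool \<times> 'a set) set \<Rightarrow> bool" where
  "gamma_flower \<Omega> i j k l \<A> =
    ((\<A> \<subseteq> bipart_i \<Omega> i \<and> is_flower_in l (gadj k) (bipart_j \<Omega> j) \<A>) \<or>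
     (\<A> \<subseteq> bipart_j \<Omega> j \<and> is_flower_in l (gadj k) (bipart_i \<Omega> i) \<A>))"

definition i_regular_star :: "'a set \<Rightarrow> nat \<Rightarrow> (bool \<times> 'a set) set \<Rightarrow> bool" where
  "i_regular_star \<Omega> i \<A> =
    (\<exists>S \<in> ksub \<Omega> (i - 1). \<A> = {(False, A) | A. A \<in> ksub \<Omega> i \<and> S \<subseteq> A})"

definition j_regular_star :: "'a set \<Rightarrow> nat \<Rightarrow> (bool \<times> 'a set) set \<Rightarrow> bool" where
  "j_regular_star \<Omega> j \<A> =
    (\<exists>S \<in> ksub \<Omega> (j - 1). \<A> = {(True, B) | B. B \<in> ksub \<Omega> j \<and> S \<subseteq> B})"

end

(*
  Let F be an l-flower of a-subsets with respect to the b-subsets, adjacency being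
  k <= |B \<inter> A|, where k < a, b.  By the Delta-system lemma for infinite families, F contains
  an infinite subfamily F' with a kernel K such that every point outside K lies in only finitely
  many members of F'; hence one can always pick members of F' whose petals A - K are pairwise
  disjoint and avoid any given finite set.  Testing the flower axioms against b-sets built from
  kernel points and petal points shows, in turn: B is adjacent to all of F iff |B \<inter> K| >= k;
  K lies in every member of F; l = b - k; and for every (l + 1)-set D outside K the number of
  members meeting D is 0 or l + 1.  The last property forces every point outside K to lie in
  exactly one member of F and every member to be K plus a single point, so F is the regular star
  of K.  An l-star cannot
  exist: (S3) would provide a b-set missing l members of F' but adjacent to all other members,
  yet a member of F' whose petal avoids that b-set meets it only inside K.
*)

theory Submission
  imports Defs
begin

lemma ksub_Un:
  assumes "T \<in> ksub \<Omega> m" "R \<in> ksub \<Omega> n" "T \<inter> R = {}"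
  shows "T \<union> R \<in> ksub \<Omega> (m + n)"
  using assms by (auto simp: ksub_def card_Un_disjoint)

lemma infinite_ksub_supersets:
  assumes "infinite \<Omega>" "T \<in> ksub \<Omega> t" "t < n"
  shows "infinite {B \<in> ksub \<Omega> n. T \<subseteq> B}"
proof
  define U where "U = T \<union> \<Union>{B \<in> ksub \<Omega> n. T \<subseteq> B}"
  assume "finite {B \<in> ksub \<Omega> n. T \<subseteq> B}"
  then have "finite U"
    using assms(2) by (auto simp: U_def ksub_def)
  then obtain R where R: "finite R" "card R = n - t" "R \<subseteq> \<Omega> - U"
    using infinite_arbitrarily_large assms(1) Diff_infinite_finite by metis
  then have "T \<union> R \<in> ksub \<Omega> n"
    using ksub_Un[OF assms(2), of R "n - t"] assms(3) by (auto simp: ksub_def U_def)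
  then have "R \<subseteq> U"
    by (auto simp: U_def)
  moreover have "R \<noteq> {}"
    using R(2) assms(3) by auto
  ultimately show False
    using R(3) by blast
qed

lemma inj_on_insert_compl: "inj_on (\<lambda>y. insert y S) (- S)"
  unfolding inj_on_def by blast

lemma ksub_supersets_eq_image:
  assumes "S \<in> ksub \<Omega> (n - 1)" "0 < n"
  shows "{A \<in> ksub \<Omega> n. S \<subseteq> A} = (\<lambda>y. insert y S) ` (\<Omega> - S)"
proof
  show "{A \<in> ksub \<Omega> n. S \<subseteq> A} \<subseteq> (\<lambda>y. insert y S) ` (\<Omega> - S)"
  proof
    fix A
    assume A: "A \<in> {A \<in> ksub \<Omega> n. S \<subseteq> A}"
    then have "card (A - S) = 1"
      using assms by (simp add: ksub_def card_Diff_subset)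
    then obtain y where "A - S = {y}"
      by (meson card_1_singletonE)
    then show "A \<in> (\<lambda>y. insert y S) ` (\<Omega> - S)"
      using A by (auto simp: ksub_def)
  qed
  show "(\<lambda>y. insert y S) ` (\<Omega> - S) \<subseteq> {A \<in> ksub \<Omega> n. S \<subseteq> A}"
    using assms by (auto simp: ksub_def)
qed

lemma card_Int_insert:
  assumes "y \<notin> S" "finite B"
  shows "card (B \<inter> insert y S) = card (B \<inter> S) + (if y \<in> B then 1 else 0)"
  using assms by (simp add: Int_insert_left Int_insert_right card_insert_if)

lemma card_Int_split:
  assumes "K \<subseteq> A" "finite B"
  shows "card (B \<inter> A) = card (B \<inter> K) + card (B \<inter> (A - K))"
proof -
  have "B \<inter> A = (B \<inter> K) \<union> (B \<inter> (A - K))"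
    using assms(1) by blast
  moreover have "card (B \<inter> K \<union> B \<inter> (A - K)) = card (B \<inter> K) + card (B \<inter> (A - K))"
    using assms(2) by (intro card_Un_disjoint) auto
  ultimately show ?thesis
    by simp
qed

lemma sum_card_Int_petals_le:
  assumes "finite B" "finite G" "pairwise (\<lambda>A A'. disjnt (A - K) (A' - K)) G"
  shows "(\<Sum>A\<in>G. card (B \<inter> (A - K))) \<le> card (B - K)"
proof -
  have "(\<Sum>A\<in>G. card (B \<inter> (A - K))) = card (\<Union>A\<in>G. B \<inter> (A - K))"
  proof (rule card_UN_disjoint[symmetric])
    show "\<forall>A\<in>G. \<forall>A'\<in>G. A \<noteq> A' \<longrightarrow> B \<inter> (A - K) \<inter> (B \<inter> (A' - K)) = {}"
      using assms(3) unfolding pairwise_def disjnt_def by blast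
  qed (use assms(1,2) in auto)
  also have "\<dots> \<le> card (B - K)"
    using assms(1) by (intro card_mono) auto
  finally show ?thesis .
qed

locale weak_sunflower =
  fixes F :: "'a set set" and K :: "'a set"
  assumes infinite_family: "infinite F"
    and finite_member: "A \<in> F \<Longrightarrow> finite A"
    and kernel_subset: "A \<in> F \<Longrightarrow> K \<subseteq> A"
    and finite_degree: "y \<notin> K \<Longrightarrow> finite {A \<in> F. y \<in> A}"

lemma weak_sunflower_insert:
  assumes "weak_sunflower F K" "\<And>A. A \<in> F \<Longrightarrow> x \<notin> A"
  shows "weak_sunflower (insert x ` F) (insert x K)"
proof -
  interpret weak_sunflower F K
    by (rule assms(1))
  have "inj_on (insert x) F"
    by (rule inj_onI) (metis Diff_insert_absorb assms(2))
  show ?thesis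
  proof
    show "infinite (insert x ` F)"
      using \<open>inj_on (insert x) F\<close> infinite_family finite_image_iff by blast
    show "finite A" "insert x K \<subseteq> A" if "A \<in> insert x ` F" for A
      using that finite_member kernel_subset by auto
    show "finite {A \<in> insert x ` F. y \<in> A}" if "y \<notin> insert x K" for y
    proof (rule finite_subset)
      show "{A \<in> insert x ` F. y \<in> A} \<subseteq> insert x ` {A \<in> F. y \<in> A}"
        using that by auto
      show "finite (insert x ` {A \<in> F. y \<in> A})"
        using that finite_degree by blast
    qed
  qed
qed

lemma infinite_family_has_weak_sunflower:
  assumes "infinite F" "\<And>A. A \<in> F \<Longrightarrow> finite A \<and> card A = n"
  shows "\<exists>F' \<subseteq> F. \<exists>K. weak_sunflower F' K"
  using assms
proof (induction n arbitrary: F)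
  case 0
  then have "F \<subseteq> {{}}"
    by (fastforce dest: "0.prems"(2))
  then show ?case
    using "0.prems"(1) finite_subset by blast
next
  case (Suc n)
  show ?case
  proof (cases "\<exists>x. infinite {A \<in> F. x \<in> A}")
    case True
    then obtain x where x: "infinite {A \<in> F. x \<in> A}"
      by blast
    have "inj_on (\<lambda>A. A - {x}) {A \<in> F. x \<in> A}"
      by (rule inj_onI) (metis (no_types, lifting) insert_Diff mem_Collect_eq)
    then have "infinite ((\<lambda>A. A - {x}) ` {A \<in> F. x \<in> A})"
      using x finite_image_iff by blast
    moreover have "finite A \<and> card A = n" if "A \<in> (\<lambda>A. A - {x}) ` {A \<in> F. x \<in> A}" for A
      using that Suc.prems(2) by auto
    ultimately obtain F1 K1 where F1: "F1 \<subseteq> (\<lambda>A. A - {x}) ` {A \<in> F. x \<in> A}"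
      and sunflower: "weak_sunflower F1 K1"
      using Suc.IH by meson
    have "insert x ` F1 \<subseteq> F"
      using F1 by (auto simp: insert_absorb)
    moreover have "weak_sunflower (insert x ` F1) (insert x K1)"
      by (rule weak_sunflower_insert[OF sunflower]) (use F1 in auto)
    ultimately show ?thesis
      by blast
  next
    case False
    then have "weak_sunflower F {}"
      using Suc.prems by unfold_locales auto
    then show ?thesis
      by blast
  qed
qed

context weak_sunflower
begin

lemma finite_kernel: "finite K"
proof -
  obtain A where "A \<in> F"
    using infinite_imp_nonempty[OF infinite_family] by blast
  then show ?thesis
    using kernel_subset finite_member by (metis finite_subset)
qed

lemma infinite_members_avoiding:
  assumes "finite E"
  shows "infinite {A \<in> F. A \<inter> E \<subseteq> K}"
proof
  assume "finite {A \<in> F. A \<inter> E \<subseteq> K}"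
  moreover have "finite (\<Union>y\<in>E - K. {A \<in> F. y \<in> A})"
    using assms finite_degree by simp
  moreover have "F \<subseteq> {A \<in> F. A \<inter> E \<subseteq> K} \<union> (\<Union>y\<in>E - K. {A \<in> F. y \<in> A})"
    by blast
  ultimately show False
    using infinite_family finite_subset by blast
qed

lemma obtain_member_avoiding:
  assumes "finite E" "finite H"
  obtains A where "A \<in> F" "A \<notin> H" "A \<inter> E \<subseteq> K"
proof -
  have "infinite ({A \<in> F. A \<inter> E \<subseteq> K} - H)"
    using infinite_members_avoiding[OF assms(1)] assms(2) by (simp add: Diff_infinite_finite)
  then obtain A where "A \<in> {A \<in> F. A \<inter> E \<subseteq> K} - H"
    using infinite_imp_nonempty ex_in_conv by metis
  then show ?thesis
    using that by blast
qed

lemma disjoint_petals: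
  assumes "finite E"
  shows "\<exists>G \<subseteq> F. finite G \<and> card G = n \<and> (\<forall>A\<in>G. A - K \<noteq> {} \<and> A \<inter> E \<subseteq> K)
           \<and> pairwise (\<lambda>A A'. disjnt (A - K) (A' - K)) G"
proof (induction n)
  case 0
  show ?case
    by (intro exI[of _ "{}"]) auto
next
  case (Suc n)
  then obtain G where G: "G \<subseteq> F" "finite G" "card G = n" "\<forall>A\<in>G. A - K \<noteq> {} \<and> A \<inter> E \<subseteq> K"
    "pairwise (\<lambda>A A'. disjnt (A - K) (A' - K)) G"
    by blast
  have "finite (E \<union> \<Union>G)"
    using assms G(2) finite_member subsetD[OF G(1)] by (auto intro!: finite_Union)
  moreover have "finite (insert K G)"
    using G(2) by simp
  ultimately obtain A where "A \<in> F" "A \<notin> insert K G" "A \<inter> (E \<union> \<Union>G) \<subseteq> K"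
    by (rule obtain_member_avoiding)
  then have A: "A \<in> F" "A \<notin> G" "A \<noteq> K" "A \<inter> E \<subseteq> K" "\<forall>A'\<in>G. disjnt (A - K) (A' - K)"
    by (auto simp: disjnt_def)
  have "A - K \<noteq> {}"
    using A(1,3) kernel_subset by blast
  moreover have "pairwise (\<lambda>A A'. disjnt (A - K) (A' - K)) (insert A G)"
    using A(5) G(5) by (simp add: pairwise_insert disjnt_sym)
  moreover have "card (insert A G) = Suc n"
    using A(2) G(2,3) by simp
  ultimately show ?case
    using A(1,4) G by (intro exI[of _ "insert A G"]) simp
qed

lemma transversal:
  assumes "finite E"
  obtains G Z where "G \<subseteq> F" "finite G" "card G = n" "finite Z" "card Z = n"
    "Z \<subseteq> \<Union>G - (K \<union> E)" "\<And>A. A \<in> G \<Longrightarrow> A \<inter> E \<subseteq> K \<and> A \<inter> Z \<noteq> {}"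
proof -
  obtain G where G: "G \<subseteq> F" "finite G" "card G = n" "\<forall>A\<in>G. A - K \<noteq> {} \<and> A \<inter> E \<subseteq> K"
    "pairwise (\<lambda>A A'. disjnt (A - K) (A' - K)) G"
    using disjoint_petals[OF assms] by blast
  define p where "p A = (SOME z. z \<in> A - K)" for A
  have p: "p A \<in> A - K" if "A \<in> G" for A
    unfolding p_def using G(4) that by (metis some_in_eq)
  have "inj_on p G"
    using p G(5) by (intro inj_onI) (metis disjnt_iff pairwise_def)
  then have "card (p ` G) = n"
    using G(3) card_image by blast
  moreover have "p ` G \<subseteq> \<Union>G - (K \<union> E)"
    "\<And>A. A \<in> G \<Longrightarrow> A \<inter> E \<subseteq> K \<and> A \<inter> p ` G \<noteq> {}"
    using p G(4) by blast+
  moreover have "finite (p ` G)"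
    using G(2) by simp
  ultimately show ?thesis
    using that[OF G(1-3)] by blast
qed

end

locale intersection_flower =
  fixes \<Omega> :: "'a set" and a b k l :: nat and F :: "'a set set"
  assumes infinite_ground: "infinite \<Omega>"
    and k_pos: "1 \<le> k" and k_less_a: "k < a" and k_less_b: "k < b" and l_pos: "0 < l"
    and family_ksub: "F \<subseteq> ksub \<Omega> a"
    and flower: "is_flower_in l (\<lambda>B A. k \<le> card (B \<inter> A)) (ksub \<Omega> b) F"
begin

abbreviation neighbours :: "'a set \<Rightarrow> 'a set set" where
  "neighbours B \<equiv> {A \<in> F. k \<le> card (B \<inter> A)}"

abbreviation members_meeting :: "'a set \<Rightarrow> 'a set set" where
  "members_meeting D \<equiv> {A \<in> F. A \<inter> D \<noteq> {}}"

lemma infinite_flower: "infinite F"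
  using flower by (simp add: is_flower_in_def)

lemma member_ksub: "A \<in> F \<Longrightarrow> A \<subseteq> \<Omega> \<and> finite A \<and> card A = a"
  using family_ksub by (auto simp: ksub_def)

lemma union_subset_ground: "G \<subseteq> F \<Longrightarrow> \<Union>G \<subseteq> \<Omega>"
  using member_ksub by blast

lemma members_meeting_insert_subset:
  assumes "\<And>A'. A' \<in> F \<Longrightarrow> x \<in> A' \<Longrightarrow> A' = A"
  shows "members_meeting (insert x D) \<subseteq> insert A (members_meeting D)"
  using assms by blast

lemma neighbours_cases:
  assumes "B \<in> ksub \<Omega> b"
  obtains "finite (neighbours B)" "card (neighbours B) = l + 1" | "neighbours B = F"
    | "neighbours B = {}"
proof -
  have "(finite (neighbours B) \<and> card (neighbours B) = l + 1) \<or> (\<forall>A\<in>F. k \<le> card (B \<inter> A))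
    \<or> neighbours B = {}"
    using flower[unfolded is_flower_in_def, THEN conjunct2, THEN conjunct1] assms by (rule bspec)
  then show ?thesis
    using that by auto
qed

lemma exists_exact_neighbours:
  assumes "X \<subseteq> F" "finite X" "card X = l + 1"
  obtains B where "B \<in> ksub \<Omega> b" "neighbours B = X"
proof -
  have "{B \<in> ksub \<Omega> b. (\<forall>A\<in>X. k \<le> card (B \<inter> A)) \<and> (\<forall>A\<in>F - X. \<not> k \<le> card (B \<inter> A))} \<noteq> {}"
    using flower[unfolded is_flower_in_def, THEN conjunct2, THEN conjunct2, THEN conjunct1] assms
    by simp
  then obtain B where "B \<in> ksub \<Omega> b" "\<forall>A\<in>X. k \<le> card (B \<inter> A)"
    "\<forall>A\<in>F - X. \<not> k \<le> card (B \<inter> A)"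
    by auto
  moreover from this have "neighbours B = X"
    using assms(1) by auto
  ultimately show ?thesis
    using that by simp
qed

lemma exists_common_neighbour:
  obtains B where "B \<in> ksub \<Omega> b" "neighbours B = F"
proof -
  have "infinite {B \<in> ksub \<Omega> b. \<forall>A\<in>F. k \<le> card (B \<inter> A)}"
    using flower by (simp add: is_flower_in_def)
  then obtain B where "B \<in> ksub \<Omega> b" "\<forall>A\<in>F. k \<le> card (B \<inter> A)"
    using infinite_imp_nonempty by (metis (no_types, lifting) ex_in_conv mem_Collect_eq)
  then show ?thesis
    using that by auto
qed

end

locale intersection_flower_kernel = intersection_flower \<Omega> a b k l F + weak_sunflower F' K
  for \<Omega> :: "'a set" and a b k l F F' K +
  assumes subfamily: "F' \<subseteq> F"
begin

lemma neighbours_eq_all_iff: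
  assumes "B \<in> ksub \<Omega> b"
  shows "neighbours B = F \<longleftrightarrow> k \<le> card (B \<inter> K)"
proof
  assume all: "neighbours B = F"
  have "finite B"
    using assms by (simp add: ksub_def)
  obtain A where "A \<in> F'" "A \<inter> B \<subseteq> K"
    using obtain_member_avoiding[OF \<open>finite B\<close> finite.emptyI] by blast
  then have "A \<in> neighbours B"
    using all subfamily by auto
  then have "k \<le> card (B \<inter> A)"
    by simp
  also have "\<dots> \<le> card (B \<inter> K)"
    using \<open>finite B\<close> \<open>A \<inter> B \<subseteq> K\<close> by (intro card_mono) auto
  finally show "k \<le> card (B \<inter> K)" .
next
  assume k_le: "k \<le> card (B \<inter> K)"
  have "F' \<subseteq> neighbours B"
  proof
    fix A
    assume "A \<in> F'"
    then have "A \<in> F" "B \<inter> K \<subseteq> B \<inter> A" "finite A"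
      using subfamily kernel_subset finite_member by auto
    then show "A \<in> neighbours B"
      using k_le card_mono[of "B \<inter> A" "B \<inter> K"] by simp
  qed
  then have "infinite (neighbours B)"
    using infinite_family finite_subset by blast
  then show "neighbours B = F"
    by (cases rule: neighbours_cases[OF assms]) auto
qed

lemma card_kernel_ge: "k \<le> card K"
proof -
  obtain B where "B \<in> ksub \<Omega> b" "neighbours B = F"
    by (rule exists_common_neighbour)
  then have "k \<le> card (B \<inter> K)"
    using neighbours_eq_all_iff by blast
  also have "\<dots> \<le> card K"
    using finite_kernel by (simp add: card_mono)
  finally show ?thesis .
qed

lemma kernel_subset_ground: "K \<subseteq> \<Omega>"
proof -
  obtain A where "A \<in> F'"
    using infinite_imp_nonempty[OF infinite_family] by blast
  then show ?thesis
    using kernel_subset subfamily member_ksub by blast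
qed

(* Otherwise a b-set meeting K in k points, one of them outside A, and avoiding A elsewhere
   would be adjacent to all of F but meet A in only k - 1 points. *)
lemma kernel_subset_member:
  assumes "A \<in> F"
  shows "K \<subseteq> A"
proof (rule ccontr)
  assume "\<not> K \<subseteq> A"
  then obtain z where z: "z \<in> K" "z \<notin> A"
    by blast
  have "k - 1 \<le> card (K - {z})"
    using card_kernel_ge z(1) finite_kernel by simp
  then obtain T where T: "T \<subseteq> K - {z}" "card T = k - 1" "finite T"
    by (meson obtain_subset_with_card_n)
  have "infinite (\<Omega> - (K \<union> A))"
    using infinite_ground finite_kernel member_ksub[OF assms] by (simp add: Diff_infinite_finite)
  then obtain R where R: "finite R" "card R = b - k" "R \<subseteq> \<Omega> - (K \<union> A)"
    by (meson infinite_arbitrarily_large)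
  define B where "B = insert z T \<union> R"
  have "z \<notin> T"
    using T(1) by blast
  then have card_zT: "card (insert z T) = k"
    using T(2,3) k_pos by simp
  then have "insert z T \<in> ksub \<Omega> k" "R \<in> ksub \<Omega> (b - k)"
    using T z R kernel_subset_ground by (auto simp: ksub_def)
  then have B: "B \<in> ksub \<Omega> b"
    using ksub_Un[of "insert z T" \<Omega> k R "b - k"] T(1) z(1) R(3) k_less_b by (auto simp: B_def)
  then have "finite B"
    by (simp add: ksub_def)
  moreover have "insert z T \<subseteq> B \<inter> K"
    using T(1) z(1) by (auto simp: B_def)
  ultimately have "k \<le> card (B \<inter> K)"
    using card_zT card_mono[of "B \<inter> K" "insert z T"] by simp
  then have "k \<le> card (B \<inter> A)"
    using neighbours_eq_all_iff[OF B] assms by blast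
  also have "\<dots> \<le> card T"
    using T(3) z(2) R(3) by (intro card_mono) (auto simp: B_def)
  finally show False
    using T(2) k_pos by simp
qed

(* Pad D with k - 1 kernel points to a b-set: its neighbours are exactly the members meeting D,
   and it is not adjacent to all of F. *)
lemma card_members_meeting:
  assumes "D \<subseteq> \<Omega> - K" "finite D" "card D = b - k + 1" "members_meeting D \<noteq> {}"
  shows "finite (members_meeting D) \<and> card (members_meeting D) = l + 1"
proof -
  have "k - 1 \<le> card K"
    using card_kernel_ge by simp
  then obtain S where S: "S \<subseteq> K" "card S = k - 1" "finite S"
    by (meson obtain_subset_with_card_n)
  have "S \<in> ksub \<Omega> (k - 1)" "D \<in> ksub \<Omega> (b - k + 1)" "S \<inter> D = {}"
    using S kernel_subset_ground assms by (auto simp: ksub_def)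
  then have B: "S \<union> D \<in> ksub \<Omega> b"
    using ksub_Un k_pos k_less_b by fastforce
  have "neighbours (S \<union> D) = members_meeting D"
  proof (intro Collect_cong conj_cong refl)
    fix A
    assume "A \<in> F"
    then have "(S \<union> D) \<inter> A = S \<union> (D \<inter> A)" "finite (D \<inter> A)"
      using kernel_subset_member S(1) assms(2) by auto
    moreover have "S \<inter> (D \<inter> A) = {}"
      using S(1) assms(1) by blast
    ultimately have "card ((S \<union> D) \<inter> A) = k - 1 + card (D \<inter> A)"
      using S(2,3) by (simp add: card_Un_disjoint)
    moreover have "card (D \<inter> A) = 0 \<longleftrightarrow> A \<inter> D = {}"
      using \<open>finite (D \<inter> A)\<close> by (simp add: Int_commute)
    ultimately show "k \<le> card ((S \<union> D) \<inter> A) \<longleftrightarrow> A \<inter> D \<noteq> {}"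
      using k_pos by auto
  qed
  moreover have "neighbours (S \<union> D) \<noteq> F"
  proof -
    have "(S \<union> D) \<inter> K = S"
      using S(1) assms(1) by blast
    then show ?thesis
      using neighbours_eq_all_iff[OF B] S(2) k_pos by simp
  qed
  ultimately show ?thesis
    using assms(4) by (cases rule: neighbours_cases[OF B]) auto
qed

lemma l_ge_b_minus_k: "b - k \<le> l"
proof -
  obtain G Z where G: "G \<subseteq> F'" "finite G" "card G = b - k + 1" "finite Z" "card Z = b - k + 1"
    "Z \<subseteq> \<Union>G - K" "\<And>A. A \<in> G \<Longrightarrow> A \<inter> Z \<noteq> {}"
    using transversal[of "{}" "b - k + 1"] by auto
  have "Z \<subseteq> \<Omega> - K"
    using G(1,6) subfamily union_subset_ground by blast
  have G_meets: "G \<subseteq> members_meeting Z"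
    using G(1,7) subfamily by auto
  moreover have "G \<noteq> {}"
    using G(3) by auto
  ultimately have "members_meeting Z \<noteq> {}"
    by blast
  then have "finite (members_meeting Z)" "card (members_meeting Z) = l + 1"
    using card_members_meeting[OF \<open>Z \<subseteq> \<Omega> - K\<close> G(4,5)] by simp_all
  then have "card G \<le> l + 1"
    using card_mono[OF _ G_meets] by simp
  then show ?thesis
    using G(3) by simp
qed

(* Take a b-set B adjacent exactly to l + 1 members with disjoint petals: each of these petals
   must contain k - |B \<inter> K| points of B - K. *)
lemma l_eq_b_minus_k: "l = b - k"
proof -
  obtain G where G: "G \<subseteq> F'" "finite G" "card G = l + 1"
    "pairwise (\<lambda>A A'. disjnt (A - K) (A' - K)) G"
    using disjoint_petals[of "{}" "l + 1"] by auto
  have "G \<subseteq> F"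
    using G(1) subfamily by blast
  then obtain B where B: "B \<in> ksub \<Omega> b" "neighbours B = G"
    using exists_exact_neighbours G(2,3) by blast
  then have B_fin: "finite B" and B_card: "card B = b"
    by (auto simp: ksub_def)
  define t where "t = card (B \<inter> K)"
  have "neighbours B \<noteq> F"
    using B(2) G(2) infinite_flower by auto
  then have "t < k"
    using neighbours_eq_all_iff[OF B(1)] by (simp add: t_def)
  have petal_bound: "k - t \<le> card (B \<inter> (A - K))" if "A \<in> G" for A
  proof -
    have "k \<le> card (B \<inter> A)"
      using that B(2) by blast
    moreover have "card (B \<inter> A) = t + card (B \<inter> (A - K))"
      unfolding t_def using card_Int_split that G(1) kernel_subset B_fin by blast
    ultimately show ?thesis
      by simp
  qed
  have "of_nat (card G) * (k - t) \<le> (\<Sum>A\<in>G. card (B \<inter> (A - K)))"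
    by (rule sum_bounded_below) (rule petal_bound)
  also have "\<dots> \<le> card (B - K)"
    using sum_card_Int_petals_le[OF B_fin G(2,4)] .
  also have "\<dots> = b - t"
    using B_fin B_card by (simp add: t_def card_Diff_subset_Int)
  finally have "(l + 1) * (k - t) \<le> b - t"
    using G(3) by simp
  moreover have "(l + 1) * (k - t) = l * (k - t) + (k - t)" "b - t = (b - k) + (k - t)"
    using \<open>t < k\<close> k_less_b by simp_all
  moreover have "l \<le> l * (k - t)"
    using \<open>t < k\<close> by (simp add: Suc_le_eq)
  ultimately show ?thesis
    using l_ge_b_minus_k by linarith
qed

(* Otherwise x together with one point from each of l further petals would meet l + 2 members. *)
lemma unique_member_containing:
  assumes "x \<notin> K" "A1 \<in> F" "A2 \<in> F" "x \<in> A1" "x \<in> A2"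
  shows "A1 = A2"
proof (rule ccontr)
  assume "A1 \<noteq> A2"
  obtain G Z where G: "G \<subseteq> F'" "finite G" "card G = l" "finite Z" "card Z = l"
    "Z \<subseteq> \<Union>G - (K \<union> {x})" "\<And>A. A \<in> G \<Longrightarrow> A \<inter> {x} \<subseteq> K \<and> A \<inter> Z \<noteq> {}"
    by (rule transversal[of "{x}" l]) auto
  have "x \<notin> Z"
    using G(6) by blast
  then have card_D: "card (insert x Z) = b - k + 1"
    using G(4,5) l_eq_b_minus_k by simp
  have D_sub: "insert x Z \<subseteq> \<Omega> - K"
    using G(1,6) subfamily union_subset_ground assms(1,2,4) member_ksub by blast
  have meets: "insert A1 (insert A2 G) \<subseteq> members_meeting (insert x Z)"
    using assms G(1,7) subfamily by auto
  then have "members_meeting (insert x Z) \<noteq> {}"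
    by blast
  then have "finite (members_meeting (insert x Z)) \<and> card (members_meeting (insert x Z)) = l + 1"
    using card_members_meeting[OF D_sub _ card_D] G(4) by simp
  then have "card (insert A1 (insert A2 G)) \<le> l + 1"
    using card_mono[OF _ meets] by simp
  moreover have "A1 \<notin> G" "A2 \<notin> G"
    using G(7) assms(1,4,5) by blast+
  ultimately show False
    using \<open>A1 \<noteq> A2\<close> G(2,3) by simp
qed

lemma members_meeting_subset:
  assumes "G \<subseteq> F" "Z \<subseteq> \<Union>G - K"
  shows "members_meeting Z \<subseteq> G"
proof
  fix A
  assume "A \<in> members_meeting Z"
  then obtain z where z: "A \<in> F" "z \<in> A" "z \<in> Z"
    by blast
  moreover obtain A' where "A' \<in> G" "z \<in> A'"
    using assms(2) z(3) by blast
  ultimately show "A \<in> G"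
    using assms unique_member_containing[of z A A'] by blast
qed

(* Otherwise x, y and one point from each of l - 1 further petals would meet only l members. *)
lemma exists_member_separating:
  assumes "A \<in> F" "x \<in> A - K" "y \<in> \<Omega> - K" "y \<noteq> x"
  shows "\<exists>A'\<in>F. y \<in> A' \<and> x \<notin> A'"
proof (rule ccontr)
  assume "\<not> ?thesis"
  then have y_only_in_A: "A' = A" if "A' \<in> F" "y \<in> A'" for A'
    using that assms(1,2) unique_member_containing[of x A' A] by blast
  have x_only_in_A: "A' = A" if "A' \<in> F" "x \<in> A'" for A'
    using that assms(1,2) unique_member_containing[of x A' A] by blast
  obtain G Z where G: "G \<subseteq> F'" "finite G" "card G = l - 1" "finite Z" "card Z = l - 1"
    "Z \<subseteq> \<Union>G - (K \<union> {x, y})"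
    by (rule transversal[of "{x, y}" "l - 1"]) auto
  have "x \<notin> Z" "y \<notin> Z"
    using G(6) by blast+
  then have card_D: "card (insert x (insert y Z)) = b - k + 1"
    using G(4,5) assms(4) l_eq_b_minus_k l_pos by simp
  have D_sub: "insert x (insert y Z) \<subseteq> \<Omega> - K"
    using G(1,6) subfamily union_subset_ground assms(1-3) member_ksub by blast
  moreover have "members_meeting (insert x (insert y Z)) \<noteq> {}"
    using assms(1,2) by blast
  ultimately have "card (members_meeting (insert x (insert y Z))) = l + 1"
    using card_members_meeting[OF D_sub _ card_D] G(4) by simp
  moreover have "members_meeting (insert x (insert y Z)) \<subseteq> insert A G"
  proof -
    have "members_meeting (insert x (insert y Z)) \<subseteq> insert A (members_meeting (insert y Z))"
      by (rule members_meeting_insert_subset[OF x_only_in_A])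
    also have "\<dots> \<subseteq> insert A (insert A (members_meeting Z))"
      by (intro insert_mono members_meeting_insert_subset[OF y_only_in_A])
    also have "\<dots> \<subseteq> insert A G"
      using members_meeting_subset[of G Z] G(1,6) subfamily by blast
    finally show ?thesis .
  qed
  then have "card (members_meeting (insert x (insert y Z))) \<le> card (insert A G)"
    using G(2) by (intro card_mono) auto
  moreover have "card (insert A G) \<le> l"
    using card_insert_le_m1[of l G A] G(3) l_pos by simp
  ultimately show False
    by simp
qed

lemma member_eq_insert_kernel:
  assumes "A \<in> F"
  obtains x where "x \<notin> K" "A = insert x K"
proof -
  have "K \<subseteq> A"
    using kernel_subset_member[OF assms] .
  have "A \<noteq> K"
  proof
    assume "A = K"
    have "A' = K" if "A' \<in> F" for A'
      using card_subset_eq[of A' K] kernel_subset_member[OF that] member_ksub[OF that]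
        member_ksub[OF assms] \<open>A = K\<close> by simp
    then have "F \<subseteq> {K}"
      by blast
    then show False
      using infinite_flower finite_subset by blast
  qed
  then obtain x where x: "x \<in> A - K"
    using \<open>K \<subseteq> A\<close> by blast
  have "A - K = {x}"
  proof (rule ccontr)
    assume "A - K \<noteq> {x}"
    then obtain y where y: "y \<in> A - K" "y \<noteq> x"
      using x by blast
    moreover have "y \<in> \<Omega>"
      using y(1) member_ksub[OF assms] by blast
    ultimately obtain A' where "A' \<in> F" "y \<in> A'" "x \<notin> A'"
      using exists_member_separating[OF assms x] by blast
    then show False
      using unique_member_containing[of y A A'] assms x y by blast
  qed
  then show ?thesis
    using that x \<open>K \<subseteq> A\<close> by blast
qed

lemma insert_kernel_member:
  assumes "x \<in> \<Omega> - K"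
  shows "insert x K \<in> F"
proof -
  obtain A where "A \<in> F'" "A \<inter> {x} \<subseteq> K"
    using obtain_member_avoiding[of "{x}" "{}"] by auto
  then have "A \<in> F" "x \<notin> A"
    using subfamily assms by auto
  obtain p where p: "p \<notin> K" "A = insert p K"
    by (rule member_eq_insert_kernel[OF \<open>A \<in> F\<close>])
  then obtain A' where "A' \<in> F" "x \<in> A'"
    using exists_member_separating[OF \<open>A \<in> F\<close>, of p x] assms \<open>x \<notin> A\<close> by blast
  moreover obtain q where "q \<notin> K" "A' = insert q K"
    by (rule member_eq_insert_kernel[OF \<open>A' \<in> F\<close>])
  ultimately show ?thesis
    using assms by auto
qed

lemma kernel_ksub: "K \<in> ksub \<Omega> (a - 1)"
proof -
  obtain A where "A \<in> F"
    using infinite_imp_nonempty[OF infinite_flower] by blast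
  then obtain x where "x \<notin> K" "A = insert x K"
    by (rule member_eq_insert_kernel)
  then show ?thesis
    using member_ksub[OF \<open>A \<in> F\<close>] finite_kernel kernel_subset_ground by (auto simp: ksub_def)
qed

lemma flower_eq_kernel_star: "F = {A \<in> ksub \<Omega> a. K \<subseteq> A}"
proof
  show "F \<subseteq> {A \<in> ksub \<Omega> a. K \<subseteq> A}"
    using family_ksub kernel_subset_member by auto
  show "{A \<in> ksub \<Omega> a. K \<subseteq> A} \<subseteq> F"
    using insert_kernel_member k_less_a by (subst ksub_supersets_eq_image[OF kernel_ksub]) auto
qed

end

context intersection_flower
begin

lemma flower_is_regular_star: "l = b - k \<and> (\<exists>S\<in>ksub \<Omega> (a - 1). F = {A \<in> ksub \<Omega> a. S \<subseteq> A})"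
proof -
  have "\<And>A. A \<in> F \<Longrightarrow> finite A \<and> card A = a"
    using member_ksub by blast
  then obtain F' K where "F' \<subseteq> F" "weak_sunflower F' K"
    using infinite_family_has_weak_sunflower[OF infinite_flower] by blast
  then interpret intersection_flower_kernel \<Omega> a b k l F F' K
    by (simp add: intersection_flower_kernel_def intersection_flower_kernel_axioms_def
        intersection_flower_axioms)
  show ?thesis
    using l_eq_b_minus_k kernel_ksub flower_eq_kernel_star by auto
qed

end

locale regular_star =
  fixes \<Omega> S :: "'a set" and a b k :: nat
  assumes infinite_ground: "infinite \<Omega>"
    and centre_ksub: "S \<in> ksub \<Omega> (a - 1)"
    and k_pos: "1 \<le> k" and k_less_a: "k < a" and k_less_b: "k < b"
begin

abbreviation star :: "'a set set" where
  "star \<equiv> {A \<in> ksub \<Omega> a. S \<subseteq> A}"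

abbreviation star_neighbours :: "'a set \<Rightarrow> 'a set set" where
  "star_neighbours B \<equiv> {A \<in> star. k \<le> card (B \<inter> A)}"

lemma centre: "S \<subseteq> \<Omega>" "finite S" "card S = a - 1"
  using centre_ksub by (auto simp: ksub_def)

lemma star_eq_image: "star = (\<lambda>y. insert y S) ` (\<Omega> - S)"
  using ksub_supersets_eq_image[OF centre_ksub] k_less_a by simp

lemma infinite_star: "infinite star"
  using infinite_ksub_supersets[OF infinite_ground centre_ksub] k_less_a by simp

lemma star_neighbours_all:
  assumes "finite B" "k \<le> card (B \<inter> S)"
  shows "star_neighbours B = star"
proof -
  have "k \<le> card (B \<inter> A)" if "S \<subseteq> A" for A
  proof -
    have "card (B \<inter> S) \<le> card (B \<inter> A)"
      using assms(1) that by (intro card_mono) auto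
    then show ?thesis
      using assms(2) by linarith
  qed
  then show ?thesis
    by blast
qed

lemma star_neighbours_empty:
  assumes "finite B" "card (B \<inter> S) + 1 < k"
  shows "star_neighbours B = {}"
proof -
  have "card (B \<inter> insert y S) < k" if "y \<notin> S" for y
    using card_Int_insert[OF that assms(1)] assms(2) by simp
  then show ?thesis
    unfolding star_eq_image by (auto simp: not_le)
qed

lemma star_neighbours_eq_image:
  assumes "B \<in> ksub \<Omega> b" "card (B \<inter> S) = k - 1"
  shows "star_neighbours B = (\<lambda>y. insert y S) ` (B - S)"
proof -
  have "finite B" "B \<subseteq> \<Omega>"
    using assms(1) by (auto simp: ksub_def)
  have "k \<le> card (B \<inter> insert y S) \<longleftrightarrow> y \<in> B" if "y \<notin> S" for y
    using card_Int_insert[OF that \<open>finite B\<close>] assms(2) k_pos by auto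
  then show ?thesis
    unfolding star_eq_image using \<open>B \<subseteq> \<Omega>\<close> by auto
qed

lemma card_star_neighbours:
  assumes "B \<in> ksub \<Omega> b" "card (B \<inter> S) = k - 1"
  shows "card (star_neighbours B) = b - k + 1"
proof -
  have "card (B - S) = b - k + 1"
    using assms centre(2) k_pos k_less_b by (simp add: ksub_def card_Diff_subset_Int Int_commute)
  moreover have "inj_on (\<lambda>y. insert y S) (B - S)"
    using inj_on_insert_compl by (rule inj_on_subset) blast
  ultimately show ?thesis
    using star_neighbours_eq_image[OF assms] by (simp add: card_image)
qed

lemma star_neighbours_cases:
  assumes B: "B \<in> ksub \<Omega> b"
  shows "(finite (star_neighbours B) \<and> card (star_neighbours B) = b - k + 1)
    \<or> (\<forall>A\<in>star. k \<le> card (B \<inter> A)) \<or> star_neighbours B = {}"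
proof -
  have "finite B"
    using B by (simp add: ksub_def)
  consider "k \<le> card (B \<inter> S)" | "card (B \<inter> S) + 1 < k" | "card (B \<inter> S) = k - 1"
    by linarith
  then show ?thesis
  proof cases
    case 1
    then show ?thesis
      using \<open>finite B\<close> star_neighbours_all by auto
  next
    case 2
    then show ?thesis
      using \<open>finite B\<close> star_neighbours_empty by auto
  next
    case 3
    then have "finite (star_neighbours B)"
      using star_neighbours_eq_image[OF B] \<open>finite B\<close> by simp
    then show ?thesis
      using card_star_neighbours[OF B 3] by blast
  qed
qed

lemma star_neighbours_eq_imageD:
  assumes "B \<in> ksub \<Omega> b" "Y \<subseteq> \<Omega> - S" "finite Y" "Y \<noteq> {}"
    and "star_neighbours B = (\<lambda>y. insert y S) ` Y"
  shows "B - S = Y"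
proof -
  have "finite B"
    using assms(1) by (simp add: ksub_def)
  have "star_neighbours B \<noteq> star"
  proof
    assume "star_neighbours B = star"
    then show False
      using assms(3,5) infinite_star by (metis finite_imageI)
  qed
  moreover have "star_neighbours B \<noteq> {}"
    using assms(4,5) by auto
  ultimately have "card (B \<inter> S) = k - 1"
    using star_neighbours_all star_neighbours_empty \<open>finite B\<close> by fastforce
  then have "(\<lambda>y. insert y S) ` (B - S) = (\<lambda>y. insert y S) ` Y"
    using star_neighbours_eq_image[OF assms(1)] assms(5) by simp
  then show ?thesis
    using inj_on_image_eq_iff[OF inj_on_insert_compl[of S], of "B - S" Y] assms(2) by blast
qed

lemma exists_star_neighbours_eq_image:
  assumes "Y \<subseteq> \<Omega> - S" "finite Y" "card Y = b - k + 1"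
  obtains B where "B \<in> ksub \<Omega> b" "star_neighbours B = (\<lambda>y. insert y S) ` Y"
proof -
  have "k - 1 \<le> card S"
    using centre k_less_a by simp
  then obtain T where T: "T \<subseteq> S" "card T = k - 1" "finite T"
    by (meson obtain_subset_with_card_n)
  have "T \<in> ksub \<Omega> (k - 1)" "Y \<in> ksub \<Omega> (b - k + 1)" "T \<inter> Y = {}"
    using T assms centre(1) by (auto simp: ksub_def)
  then have B: "T \<union> Y \<in> ksub \<Omega> b"
    using ksub_Un k_pos k_less_b by fastforce
  moreover have "(T \<union> Y) \<inter> S = T" "(T \<union> Y) - S = Y"
    using T(1) assms(1) by auto
  ultimately have "star_neighbours (T \<union> Y) = (\<lambda>y. insert y S) ` Y"
    using star_neighbours_eq_image[OF B] T(2) by (simp add: Int_commute)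
  then show ?thesis
    using that B by blast
qed

lemma exact_star_neighbours:
  assumes "X \<subseteq> star" "finite X" "card X = b - k + 1"
  shows "finite {B \<in> ksub \<Omega> b. (\<forall>A\<in>X. k \<le> card (B \<inter> A)) \<and> (\<forall>A\<in>star - X. \<not> k \<le> card (B \<inter> A))}
    \<and> {B \<in> ksub \<Omega> b. (\<forall>A\<in>X. k \<le> card (B \<inter> A)) \<and> (\<forall>A\<in>star - X. \<not> k \<le> card (B \<inter> A))} \<noteq> {}"
proof -
  have eq: "{B \<in> ksub \<Omega> b. (\<forall>A\<in>X. k \<le> card (B \<inter> A)) \<and> (\<forall>A\<in>star - X. \<not> k \<le> card (B \<inter> A))}
      = {B \<in> ksub \<Omega> b. star_neighbours B = X}"
    using assms(1) by blast
  obtain Y where Y: "Y \<subseteq> \<Omega> - S" "X = (\<lambda>y. insert y S) ` Y"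
    using assms(1) unfolding star_eq_image by (rule subset_imageE)
  have "inj_on (\<lambda>y. insert y S) Y"
    using inj_on_insert_compl by (rule inj_on_subset) (use Y(1) in blast)
  then have Y_card: "finite Y" "card Y = b - k + 1"
    using assms(2,3) Y(2) by (auto simp: finite_image_iff card_image)
  then have "Y \<noteq> {}"
    by auto
  have "B \<subseteq> S \<union> Y" if "B \<in> ksub \<Omega> b" "star_neighbours B = X" for B
    using star_neighbours_eq_imageD[OF that(1) Y(1) Y_card(1) \<open>Y \<noteq> {}\<close>] that(2) Y(2) by blast
  then have "{B \<in> ksub \<Omega> b. star_neighbours B = X} \<subseteq> Pow (S \<union> Y)"
    by blast
  moreover have "finite (Pow (S \<union> Y))"
    using centre(2) Y_card(1) by simp
  ultimately have "finite {B \<in> ksub \<Omega> b. star_neighbours B = X}"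
    by (rule finite_subset)
  moreover obtain B where "B \<in> ksub \<Omega> b" "star_neighbours B = X"
    using exists_star_neighbours_eq_image[OF Y(1) Y_card] Y(2) by blast
  ultimately show ?thesis
    unfolding eq by blast
qed

lemma infinite_common_star_neighbours:
  "infinite {B \<in> ksub \<Omega> b. \<forall>A\<in>star. k \<le> card (B \<inter> A)}"
proof -
  have "k \<le> card S"
    using centre k_less_a by simp
  then obtain T where T: "T \<subseteq> S" "card T = k" "finite T"
    by (meson obtain_subset_with_card_n)
  then have "T \<in> ksub \<Omega> k"
    using centre(1) by (auto simp: ksub_def)
  have "k \<le> card (B \<inter> A)" if "B \<in> ksub \<Omega> b" "T \<subseteq> B" "S \<subseteq> A" for A B
    using that T by (auto simp: ksub_def intro!: card_mono[of "B \<inter> A" T, simplified])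
  then have "{B \<in> ksub \<Omega> b. T \<subseteq> B} \<subseteq> {B \<in> ksub \<Omega> b. \<forall>A\<in>star. k \<le> card (B \<inter> A)}"
    by blast
  moreover have "infinite {B \<in> ksub \<Omega> b. T \<subseteq> B}"
    using infinite_ksub_supersets[OF infinite_ground \<open>T \<in> ksub \<Omega> k\<close> k_less_b] .
  ultimately show ?thesis
    using finite_subset by blast
qed

lemma regular_star_is_flower: "is_flower_in (b - k) (\<lambda>B A. k \<le> card (B \<inter> A)) (ksub \<Omega> b) star"
  unfolding is_flower_in_def
  using infinite_star star_neighbours_cases exact_star_neighbours infinite_common_star_neighbours
  by (intro conjI) blast+

end

lemma is_star_in_complement_witness:
  assumes "is_star_in l adj Q \<A>" "Y \<subseteq> \<A>" "finite Y" "card Y = l"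
  obtains v where "v \<in> Q" "\<forall>a\<in>Y. \<not> adj v a" "\<forall>a\<in>\<A> - Y. adj v a"
proof -
  have "{v \<in> Q. (\<forall>a\<in>Y. \<not> adj v a) \<and> (\<forall>a\<in>\<A> - Y. adj v a)} \<noteq> {}"
    using assms(1)[unfolded is_star_in_def, THEN conjunct2, THEN conjunct2, THEN conjunct2,
        rule_format, of Y] assms(2-4) by simp
  then obtain v where "v \<in> {v \<in> Q. (\<forall>a\<in>Y. \<not> adj v a) \<and> (\<forall>a\<in>\<A> - Y. adj v a)}"
    by (rule ex_in_conv[THEN iffD2, THEN exE])
  then show ?thesis
    using that by blast
qed

lemma no_intersection_star:
  assumes "F \<subseteq> ksub \<Omega> a" "0 < l"
  shows "\<not> is_star_in l (\<lambda>B A. k \<le> card (B \<inter> A)) (ksub \<Omega> b) F"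
proof
  assume star: "is_star_in l (\<lambda>B A. k \<le> card (B \<inter> A)) (ksub \<Omega> b) F"
  have "\<And>A. A \<in> F \<Longrightarrow> finite A \<and> card A = a"
    using assms(1) by (auto simp: ksub_def)
  moreover have "infinite F"
    using star by (simp add: is_star_in_def)
  ultimately obtain F' K where "F' \<subseteq> F" and sunflower: "weak_sunflower F' K"
    using infinite_family_has_weak_sunflower[of F a] by blast
  interpret weak_sunflower F' K
    by (rule sunflower)
  obtain Y where Y: "finite Y" "card Y = l" "Y \<subseteq> F'"
    using infinite_arbitrarily_large[OF infinite_family] by blast
  then have "Y \<subseteq> F"
    using \<open>F' \<subseteq> F\<close> by blast
  then obtain B where B: "B \<in> ksub \<Omega> b" "\<forall>A\<in>Y. \<not> k \<le> card (B \<inter> A)"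
    "\<forall>A\<in>F - Y. k \<le> card (B \<inter> A)"
    by (rule is_star_in_complement_witness[OF star _ Y(1,2)])
  then have "finite B"
    by (simp add: ksub_def)
  obtain A1 where "A1 \<in> Y"
    using Y(2) assms(2) by fastforce
  then have "card (B \<inter> K) \<le> card (B \<inter> A1)"
    using \<open>finite B\<close> kernel_subset Y(3) by (intro card_mono) auto
  then have "card (B \<inter> K) < k"
    using B(2) \<open>A1 \<in> Y\<close> by (meson le_less_trans not_le)
  obtain A where "A \<in> F'" "A \<notin> Y" "A \<inter> B \<subseteq> K"
    by (rule obtain_member_avoiding[OF \<open>finite B\<close> Y(1)])
  then have "k \<le> card (B \<inter> A)"
    using B(3) \<open>F' \<subseteq> F\<close> by blast
  also have "\<dots> \<le> card (B \<inter> K)"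
    using \<open>finite B\<close> \<open>A \<inter> B \<subseteq> K\<close> by (intro card_mono) auto
  finally show False
    using \<open>card (B \<inter> K) < k\<close> by simp
qed

lemma inj_image_simps:
  assumes "inj g"
  shows "finite (g ` A) \<longleftrightarrow> finite A" "card (g ` A) = card A"
    "{x \<in> g ` A. P x} = g ` {x \<in> A. P (g x)}" "g ` A - g ` C = g ` (A - C)"
  using inj_on_subset[OF assms subset_UNIV] assms
  by (auto simp: finite_image_iff card_image image_set_diff)

lemma all_card_subsets_image:
  assumes "inj g"
  shows "(\<forall>A. A \<subseteq> g ` F \<and> finite A \<and> card A = n \<longrightarrow> P A)
    \<longleftrightarrow> (\<forall>A. A \<subseteq> F \<and> finite A \<and> card A = n \<longrightarrow> P (g ` A))"
  using inj_image_simps(1,2)[OF assms] by (auto simp: subset_image_iff)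

lemma is_flower_in_image:
  assumes "inj g" "inj h"
  shows "is_flower_in l adj (h ` Q) (g ` F) \<longleftrightarrow> is_flower_in l (\<lambda>v a. adj (h v) (g a)) Q F"
  unfolding is_flower_in_def all_card_subsets_image[OF assms(1)]
  by (simp add: inj_image_simps[OF assms(1)] inj_image_simps[OF assms(2)])

lemma is_star_in_image:
  assumes "inj g" "inj h"
  shows "is_star_in l adj (h ` Q) (g ` F) \<longleftrightarrow> is_star_in l (\<lambda>v a. adj (h v) (g a)) Q F"
  unfolding is_star_in_def all_card_subsets_image[OF assms(1)]
  by (simp add: inj_image_simps[OF assms(1)] inj_image_simps[OF assms(2)])

lemma inj_Pair: "inj (Pair c)"
  by (simp add: inj_def)

lemma is_flower_in_gadj_iff:
  "is_flower_in l (gadj k) (Pair (\<not> c) ` Q) (Pair c ` F)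
    \<longleftrightarrow> is_flower_in l (\<lambda>B A. k \<le> card (B \<inter> A)) Q F"
  by (simp add: is_flower_in_image inj_Pair gadj_def)

lemma is_star_in_gadj_iff:
  "is_star_in l (gadj k) (Pair (\<not> c) ` Q) (Pair c ` F)
    \<longleftrightarrow> is_star_in l (\<lambda>B A. k \<le> card (B \<inter> A)) Q F"
  by (simp add: is_star_in_image inj_Pair gadj_def)

lemma tagged_regular_star_eq:
  "{(c, A) | A. A \<in> ksub \<Omega> n \<and> S \<subseteq> A} = Pair c ` {A \<in> ksub \<Omega> n. S \<subseteq> A}"
  by auto

lemma tagged_flower_is_regular_star:
  assumes "infinite \<Omega>" "1 \<le> k" "k < a" "k < b" "0 < l" "\<A> \<subseteq> Pair c ` ksub \<Omega> a"
    and flower: "is_flower_in l (gadj k) (Pair (\<not> c) ` ksub \<Omega> b) \<A>"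
  shows "l = b - k \<and> (\<exists>S\<in>ksub \<Omega> (a - 1). \<A> = {(c, A) | A. A \<in> ksub \<Omega> a \<and> S \<subseteq> A})"
proof -
  obtain F where F: "F \<subseteq> ksub \<Omega> a" "\<A> = Pair c ` F"
    using assms(6) by (rule subset_imageE)
  have "is_flower_in l (\<lambda>B A. k \<le> card (B \<inter> A)) (ksub \<Omega> b) F"
    using flower unfolding F(2) is_flower_in_gadj_iff .
  then interpret intersection_flower \<Omega> a b k l F
    using assms F(1) by unfold_locales
  obtain S where "S \<in> ksub \<Omega> (a - 1)" "F = {A \<in> ksub \<Omega> a. S \<subseteq> A}" "l = b - k"
    using flower_is_regular_star by blast
  then show ?thesis
    unfolding F(2) tagged_regular_star_eq by blast
qed

lemma tagged_regular_star_is_flower: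
  assumes "infinite \<Omega>" "1 \<le> k" "k < a" "k < b" "S \<in> ksub \<Omega> (a - 1)"
  shows "is_flower_in (b - k) (gadj k) (Pair (\<not> c) ` ksub \<Omega> b)
    {(c, A) | A. A \<in> ksub \<Omega> a \<and> S \<subseteq> A}"
proof -
  interpret regular_star \<Omega> S a b k
    using assms by unfold_locales
  show ?thesis
    using regular_star_is_flower by (simp add: tagged_regular_star_eq is_flower_in_gadj_iff)
qed

lemma tagged_no_star:
  assumes "\<A> \<subseteq> Pair c ` ksub \<Omega> a" "0 < l"
  shows "\<not> is_star_in l (gadj k) (Pair (\<not> c) ` ksub \<Omega> b) \<A>"
proof -
  obtain F where "F \<subseteq> ksub \<Omega> a" "\<A> = Pair c ` F"
    using assms(1) by (rule subset_imageE)
  then show ?thesis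
    using no_intersection_star assms(2) by (simp add: is_star_in_gadj_iff)
qed

theorem proposition4p6:
  fixes \<Omega> :: "'a set" and i j k :: nat
  assumes "infinite \<Omega>" and "1 \<le> k" and "k < i" and "i \<le> j"
  shows "(\<forall>l>0. \<forall>\<A>. gamma_flower \<Omega> i j k l \<A> \<longrightarrow>
            (j_regular_star \<Omega> j \<A> \<and> l = i - k) \<or> (i_regular_star \<Omega> i \<A> \<and> l = j - k))
       \<and> (\<forall>\<A>. j_regular_star \<Omega> j \<A> \<longrightarrow> gamma_flower \<Omega> i j k (i - k) \<A>)
       \<and> (\<forall>\<A>. i_regular_star \<Omega> i \<A> \<longrightarrow> gamma_flower \<Omega> i j k (j - k) \<A>)
       \<and> (\<forall>l>0. \<forall>\<A>. \<not> gamma_star \<Omega> i j k l \<A>)"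
proof (intro conjI allI impI)
  have "k < j"
    using assms by simp
  have biparts: "bipart_i \<Omega> i = Pair False ` ksub \<Omega> i" "bipart_j \<Omega> j = Pair True ` ksub \<Omega> j"
    by (auto simp: bipart_i_def bipart_j_def)
  show "(j_regular_star \<Omega> j \<A> \<and> l = i - k) \<or> (i_regular_star \<Omega> i \<A> \<and> l = j - k)"
    if "0 < l" "gamma_flower \<Omega> i j k l \<A>" for l \<A>
    using that tagged_flower_is_regular_star[OF assms(1-3) \<open>k < j\<close>, of l \<A> False]
      tagged_flower_is_regular_star[OF assms(1,2) \<open>k < j\<close> assms(3), of l \<A> True]
    unfolding gamma_flower_def i_regular_star_def j_regular_star_def biparts by auto
  show "gamma_flower \<Omega> i j k (i - k) \<A>" if "j_regular_star \<Omega> j \<A>" for \<A>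
    using that tagged_regular_star_is_flower[OF assms(1,2) \<open>k < j\<close> assms(3), of _ True]
    unfolding gamma_flower_def j_regular_star_def biparts by auto
  show "gamma_flower \<Omega> i j k (j - k) \<A>" if "i_regular_star \<Omega> i \<A>" for \<A>
    using that tagged_regular_star_is_flower[OF assms(1-3) \<open>k < j\<close>, of _ False]
    unfolding gamma_flower_def i_regular_star_def biparts by auto
  show "\<not> gamma_star \<Omega> i j k l \<A>" if "0 < l" for l \<A>
    using that tagged_no_star[of \<A> False \<Omega> i l k j] tagged_no_star[of \<A> True \<Omega> j l k i]
    unfolding gamma_star_def biparts by auto
qed

end
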